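(* Let $C_1$ be a binary singly-even self-dual $(n,k,d)$-code and $C_2$ a binary doubly-even self-dual code of length $n$. Suppose $C_1$ and $C_2$ are neighbors, and let $C_{k-1}=C_1\cap C_2$ (their common maximal doubly-even subcode). Then every codeword $c\in C_{k-1}^{\perp}$ of weight $w(c)\equiv 2\pmod 4$ satisfies $d\le w(c)\le n-d$.
   Context: Codes are binary linear codes in $\mathbb{F}_2^n$ with the standard inner product $\sum_i x_iy_i\in\mathbb{F}_2$; $D^\perp$ denotes the dual code of $D$, and $C$ is self-dual if $C=C^\perp$ (then $k=n/2$). An $(n,k,d)$-code has length $n$, dimension $k$, minimum distance $d$. The weight $w(x)$ is the number of nonzero coordinates. A self-dual code is singly-even if it contains a codeword of weight $\equiv 2\pmod 4$, and doubly-even if all codewords have weight divisible by $4$. Two self-dual codes of length $n$ are neighbors if their intersection has dimension $n/2-1$. *)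

theory Defs
  imports Main "HOL.Vector_Spaces" "HOL-Library.Z2" "HOL-Library.Function_Algebras"
begin

text \<open>Words of length n over F_2 are functions from a finite index type 'n
  (with CARD('n) = n) to the two-element field bit; addition and zero are
  pointwise (Function_Algebras).\<close>

definition scaleF2 :: "bit \<Rightarrow> ('n \<Rightarrow> bit) \<Rightarrow> ('n \<Rightarrow> bit)" where
  "scaleF2 c x = (\<lambda>i. c * x i)"

definition ip :: "('n::finite \<Rightarrow> bit) \<Rightarrow> ('n \<Rightarrow> bit) \<Rightarrow> bit" where
  "ip x y = (\<Sum>i\<in>UNIV. x i * y i)"

definition wt :: "('n::finite \<Rightarrow> bit) \<Rightarrow> nat" where
  "wt x = card {i. x i \<noteq> 0}"

definition linear_code :: "('n::finite \<Rightarrow> bit) set \<Rightarrow> bool" where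
  "linear_code C \<longleftrightarrow> module.subspace scaleF2 C"

definition code_dim :: "('n::finite \<Rightarrow> bit) set \<Rightarrow> nat" where
  "code_dim C = vector_space.dim scaleF2 C"

definition dual :: "('n::finite \<Rightarrow> bit) set \<Rightarrow> ('n \<Rightarrow> bit) set" where
  "dual D = {x. \<forall>y\<in>D. ip x y = 0}"

definition self_dual :: "('n::finite \<Rightarrow> bit) set \<Rightarrow> bool" where
  "self_dual C \<longleftrightarrow> linear_code C \<and> C = dual C"

definition min_dist :: "('n::finite \<Rightarrow> bit) set \<Rightarrow> nat" where
  "min_dist C = Min {wt x | x. x \<in> C \<and> x \<noteq> 0}"

definition singly_even :: "('n::finite \<Rightarrow> bit) set \<Rightarrow> bool" where
  "singly_even C \<longleftrightarrow> self_dual C \<and> (\<exists>x\<in>C. wt x mod 4 = 2)"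

definition doubly_even :: "('n::finite \<Rightarrow> bit) set \<Rightarrow> bool" where
  "doubly_even C \<longleftrightarrow> (\<forall>x\<in>C. wt x mod 4 = 0)"

definition neighbors :: "('n::finite \<Rightarrow> bit) set \<Rightarrow> ('n \<Rightarrow> bit) set \<Rightarrow> bool" where
  "neighbors C1 C2 \<longleftrightarrow> self_dual C1 \<and> self_dual C2 \<and>
     code_dim (C1 \<inter> C2) = card (UNIV :: 'n set) div 2 - 1"

end

theory Submission
  imports Defs "HOL-Library.Cardinality"
begin

text \<open>Let \<open>C0 = C1 \<inter> C2\<close>. Character sums give \<open>|D| |D\<^sup>\<bottom>| = 2\<^sup>n\<close>, so \<open>C0\<close> has
  index 2 in \<open>C1\<close> and in \<open>C2\<close>; hence a vector of \<open>C0\<^sup>\<bottom>\<close> lies in \<open>C1\<close> (resp. \<open>C2\<close>)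
  once it is orthogonal to a single vector of \<open>C1 - C0\<close> (resp. \<open>C2 - C0\<close>). Fix \<open>x \<in> C1\<close>
  of weight \<open>2 mod 4\<close> and \<open>y \<in> C2 - C0\<close>. If \<open>c \<in> C0\<^sup>\<bottom>\<close> has weight \<open>2 mod 4\<close> and
  \<open>c \<notin> C1\<close>, then \<open>c \<cdot> x = c \<cdot> y = x \<cdot> y = 1\<close>, so \<open>c + x\<close> is orthogonal to \<open>y\<close> and lies
  in the doubly-even code \<open>C2\<close>, yet \<open>wt (c + x) \<equiv> 2 + 2 + 2 (mod 4)\<close>. Thus \<open>c \<in> C1\<close>, and
  so is its complement \<open>c + 1\<close>, which is nonzero because \<open>4\<close> divides \<open>n\<close>.\<close>

lemma UNIV_bit: "(UNIV :: bit set) = {0, 1}"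
  by (auto intro: bit.exhaust)

instance bit :: finite
  by standard (simp add: UNIV_bit)

lemma bit_add_self [simp]: "(x :: bit) + x = 0"
  by (cases x) simp_all

lemma fun_bit_add_self [simp]: "(x :: 'a \<Rightarrow> bit) + x = 0"
  by (simp add: fun_eq_iff)

lemma of_nat_bit: "(of_nat k :: bit) = (if even k then 0 else 1)"
  by (induction k) auto

interpretation F: vector_space scaleF2
  by standard (auto simp: scaleF2_def fun_eq_iff algebra_simps)

lemma scaleF2_bit: "scaleF2 c v = (if c = 0 then 0 else v)"
  by (cases c) (auto simp: scaleF2_def fun_eq_iff)

lemma linear_code_zero: "linear_code C \<Longrightarrow> 0 \<in> C"
  unfolding linear_code_def by (rule F.subspace_0)

lemma linear_code_add: "linear_code C \<Longrightarrow> x \<in> C \<Longrightarrow> y \<in> C \<Longrightarrow> x + y \<in> C"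
  unfolding linear_code_def by (rule F.subspace_add)

lemma linear_code_Int: "linear_code C \<Longrightarrow> linear_code D \<Longrightarrow> linear_code (C \<inter> D)"
  unfolding linear_code_def by (rule F.subspace_inter)

subsection \<open>Inner product and weight\<close>

lemma ip_add_left: "ip (x + y) z = ip x z + ip y z"
  unfolding ip_def plus_fun_def
  by (simp add: distrib_right sum.distrib del: add_bit_eq_xor mult_bit_eq_and)

lemma ip_add_right: "ip z (x + y) = ip z x + ip z y"
  unfolding ip_def plus_fun_def
  by (simp add: distrib_left sum.distrib del: add_bit_eq_xor mult_bit_eq_and)

lemma ip_zero_right [simp]: "ip x 0 = 0"
  by (simp add: ip_def)

lemma ip_eq_card_common_support: "ip x y = of_nat (card {i. x i \<noteq> 0 \<and> y i \<noteq> 0})"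
proof -
  have "ip x y = (\<Sum>i\<in>UNIV. if x i \<noteq> 0 \<and> y i \<noteq> 0 then 1 else 0)"
    unfolding ip_def by (rule sum.cong) auto
  then show ?thesis
    by (simp add: sum.If_cases)
qed

lemma ip_self: "ip x x = ip (\<lambda>_. 1) x"
  unfolding ip_def by (rule sum.cong) (auto intro: bit.exhaust)

lemma wt_add: "wt (x + y) + 2 * card {i. x i \<noteq> 0 \<and> y i \<noteq> 0} = wt x + wt y"
proof -
  define A where "A = {i. x i \<noteq> 0}"
  define B where "B = {i. y i \<noteq> 0}"
  have "wt (x + y) = card ((A \<union> B) - (A \<inter> B))"
    unfolding wt_def by (rule arg_cong[where f = card]) (auto simp: A_def B_def)
  also have "\<dots> = card (A \<union> B) - card (A \<inter> B)"
    by (rule card_Diff_subset) auto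
  finally have "wt (x + y) = card (A \<union> B) - card (A \<inter> B)" .
  moreover have "card (A \<union> B) + card (A \<inter> B) = card A + card B"
    using card_Un_Int[of A B] by simp
  moreover have "card (A \<inter> B) \<le> card (A \<union> B)"
    by (rule card_mono) auto
  moreover have "{i. x i \<noteq> 0 \<and> y i \<noteq> 0} = A \<inter> B"
    by (auto simp: A_def B_def)
  ultimately show ?thesis
    unfolding wt_def A_def[symmetric] B_def[symmetric] by simp
qed

lemma wt_add_mod_4: "wt (x + y) mod 4 = (wt x + wt y + (if ip x y = 0 then 0 else 2)) mod 4"
proof -
  define m where "m = card {i. x i \<noteq> 0 \<and> y i \<noteq> 0}"
  have "wt x + wt y + 2 * m = wt (x + y) + 4 * m"
    using wt_add[of x y] unfolding m_def by simp
  then have "wt (x + y) mod 4 = (wt x + wt y + 2 * m) mod 4"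
    by simp
  also have "\<dots> = (wt x + wt y + (2 * m) mod 4) mod 4"
    by (rule mod_add_right_eq[symmetric])
  also have "(2 * m) mod 4 = (if ip x y = 0 then 0 else 2)"
  proof -
    have "ip x y = (if even m then 0 else 1)"
      unfolding m_def ip_eq_card_common_support of_nat_bit ..
    moreover have "(2 * m) mod 4 = (if even m then 0 else 2)"
      by presburger
    ultimately show ?thesis
      by simp
  qed
  finally show ?thesis .
qed

lemma wt_zero [simp]: "wt (0 :: 'n::finite \<Rightarrow> bit) = 0"
  by (simp add: wt_def)

lemma wt_eq_0_iff [simp]: "wt (x :: 'n::finite \<Rightarrow> bit) = 0 \<longleftrightarrow> x = 0"
  by (auto simp: wt_def fun_eq_iff)

lemma wt_ones [simp]: "wt (\<lambda>_::'n::finite. 1 :: bit) = CARD('n)"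
  by (simp add: wt_def)

lemma wt_le_card: "wt (x :: 'n::finite \<Rightarrow> bit) \<le> CARD('n)"
  unfolding wt_def by (rule card_mono) auto

lemma wt_add_ones: "wt (x + (\<lambda>_. 1)) = CARD('n::finite) - wt (x :: 'n \<Rightarrow> bit)"
proof -
  have "{i. (x + (\<lambda>_. 1)) i \<noteq> 0} = UNIV - {i. x i \<noteq> 0}"
    by auto
  then show ?thesis
    unfolding wt_def by (simp add: card_Diff_subset)
qed

subsection \<open>Counting codewords\<close>

lemma span_insert_F2: "F.span (insert b B) = F.span B \<union> (\<lambda>x. b + x) ` F.span B"
proof (intro equalityI subsetI)
  fix x assume "x \<in> F.span (insert b B)"
  then obtain k where k: "x - scaleF2 k b \<in> F.span B"
    by (auto simp: F.span_insert)
  show "x \<in> F.span B \<union> (\<lambda>x. b + x) ` F.span B"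
  proof (cases "k = 0")
    case True
    then show ?thesis using k by (simp add: scaleF2_bit)
  next
    case False
    then have "x = b + (x - b)" and "x - b \<in> F.span B"
      using k by (simp_all add: scaleF2_bit)
    then show ?thesis by blast
  qed
next
  fix x assume "x \<in> F.span B \<union> (\<lambda>x. b + x) ` F.span B"
  then show "x \<in> F.span (insert b B)"
    by (auto intro: F.span_add F.span_base F.span_mono[THEN subsetD, of B])
qed

lemma card_span_independent:
  fixes B :: "('n::finite \<Rightarrow> bit) set"
  assumes "F.independent B"
  shows "card (F.span B) = 2 ^ card B"
proof -
  have "finite B" by simp
  then show ?thesis using assms
  proof (induction B rule: finite_induct)
    case empty
    then show ?case by simp
  next
    case (insert b B)
    then have indep: "F.independent B" and b: "b \<notin> F.span B"
      by (simp_all add: F.independent_insert)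
    have "F.span B \<inter> (\<lambda>x. b + x) ` F.span B = {}"
    proof (rule ccontr)
      assume "F.span B \<inter> (\<lambda>x. b + x) ` F.span B \<noteq> {}"
      then obtain x where "b + x \<in> F.span B" "x \<in> F.span B"
        by blast
      then have "(b + x) + x \<in> F.span B"
        by (rule F.span_add)
      then show False
        using b by (simp add: add.assoc)
    qed
    moreover have "card ((\<lambda>x. b + x) ` F.span B) = card (F.span B)"
      by (rule card_image) (simp add: inj_on_def)
    ultimately have "card (F.span (insert b B)) = 2 * card (F.span B)"
      unfolding span_insert_F2 by (simp add: card_Un_disjoint)
    then show ?case
      using insert.IH[OF indep] insert.hyps by simp
  qed
qed

lemma card_linear_code:
  assumes "linear_code (C :: ('n::finite \<Rightarrow> bit) set)"
  shows "card C = 2 ^ code_dim C"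
proof -
  obtain B where B: "B \<subseteq> C" "F.independent B" "C \<subseteq> F.span B" "card B = F.dim C"
    by (rule F.basis_exists)
  have "F.span B = C"
    using B assms by (intro F.span_subspace) (simp_all add: linear_code_def)
  then show ?thesis
    using card_span_independent[OF B(2)] B(4) by (simp add: code_dim_def)
qed

lemma sum_sign_reversing_involution:
  fixes f :: "'a \<Rightarrow> int"
  assumes "finite A" "\<And>a. a \<in> A \<Longrightarrow> g a \<in> A" "\<And>a. g (g a) = a"
    and "\<And>a. a \<in> A \<Longrightarrow> f (g a) = - f a"
  shows "sum f A = 0"
proof -
  have "bij_betw g A A"
    by (rule bij_betw_byWitness[where f' = g]) (use assms(2,3) in auto)
  then have "sum f A = sum (\<lambda>a. f (g a)) A"
    using sum.reindex_bij_betw[of g A A f] by simp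
  also have "\<dots> = - sum f A"
    using assms(4) by (simp add: sum_negf)
  finally show ?thesis by simp
qed

definition character :: "('n::finite \<Rightarrow> bit) \<Rightarrow> ('n \<Rightarrow> bit) \<Rightarrow> int" where
  "character x v = (if ip x v = 0 then 1 else -1)"

lemma character_add_left: "ip w v \<noteq> 0 \<Longrightarrow> character (x + w) v = - character x v"
  by (cases "ip x v"; cases "ip w v") (auto simp: character_def ip_add_left)

lemma character_add_right: "ip x w \<noteq> 0 \<Longrightarrow> character x (v + w) = - character x v"
  by (cases "ip x v"; cases "ip x w") (auto simp: character_def ip_add_right)

lemma sum_character_UNIV:
  "(\<Sum>x\<in>UNIV. character x v) = (if v = 0 then 2 ^ CARD('n) else 0)"
  for v :: "'n::finite \<Rightarrow> bit"
proof (cases "v = 0")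
  case True
  then show ?thesis
    by (simp add: character_def card_fun UNIV_bit)
next
  case False
  then obtain i where i: "v i \<noteq> 0"
    by (auto simp: fun_eq_iff)
  define e :: "'n \<Rightarrow> bit" where "e = (\<lambda>j. if j = i then 1 else 0)"
  have "ip e v = (\<Sum>j\<in>UNIV. if j = i then v j else 0)"
    unfolding ip_def e_def by (rule sum.cong) auto
  then have "ip e v \<noteq> 0"
    using i by simp
  then have "(\<Sum>x\<in>UNIV. character x v) = 0"
    by (intro sum_sign_reversing_involution[where g = "\<lambda>x. x + e"])
      (simp_all add: add.assoc character_add_left)
  then show ?thesis
    using False by simp
qed

lemma sum_character_code:
  assumes "linear_code D"
  shows "(\<Sum>v\<in>D. character x v) = (if x \<in> dual D then int (card D) else 0)"
proof (cases "x \<in> dual D")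
  case True
  then show ?thesis
    by (simp add: dual_def character_def)
next
  case False
  then obtain w where w: "w \<in> D" "ip x w \<noteq> 0"
    by (auto simp: dual_def)
  have "(\<Sum>v\<in>D. character x v) = 0"
    using w assms by (intro sum_sign_reversing_involution[where g = "\<lambda>v. v + w"])
      (simp_all add: add.assoc character_add_right linear_code_add)
  then show ?thesis
    using False by simp
qed

lemma card_mult_card_dual:
  assumes "linear_code (D :: ('n::finite \<Rightarrow> bit) set)"
  shows "card D * card (dual D) = 2 ^ CARD('n)"
proof -
  have "int (2 ^ CARD('n)) = (\<Sum>v\<in>D. \<Sum>x\<in>UNIV. character x v)"
    using linear_code_zero[OF assms] by (simp add: sum_character_UNIV)
  also have "\<dots> = (\<Sum>x\<in>UNIV. \<Sum>v\<in>D. character x v)"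
    by (rule sum.swap)
  also have "\<dots> = int (card D * card (dual D))"
    using assms by (simp add: sum_character_code sum.If_cases)
  finally have "2 ^ CARD('n) = card D * card (dual D)"
    by (simp only: of_nat_eq_iff)
  then show ?thesis ..
qed

lemma self_dual_code_dim:
  assumes "self_dual (C :: ('n::finite \<Rightarrow> bit) set)"
  shows "2 * code_dim C = CARD('n)"
proof -
  have "linear_code C" "dual C = C"
    using assms by (simp_all add: self_dual_def)
  then have "(2::nat) ^ (2 * code_dim C) = 2 ^ CARD('n)"
    using card_mult_card_dual[of C] card_linear_code[of C]
    by (simp add: mult_2 power_add)
  then show ?thesis
    by simp
qed

subsection \<open>Codes of codimension one\<close>

lemma dual_antimono: "C \<subseteq> D \<Longrightarrow> dual D \<subseteq> dual C"
  by (auto simp: dual_def)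

lemma dual_add: "x \<in> dual D \<Longrightarrow> y \<in> dual D \<Longrightarrow> x + y \<in> dual D"
  by (auto simp: dual_def ip_add_left)

lemma codim_one_coset:
  assumes "linear_code C0" "C0 \<subseteq> C" "linear_code C" "card C = 2 * card C0"
    and "y \<in> C" "y \<notin> C0" "z \<in> C" "z \<notin> C0"
  shows "z + y \<in> C0"
proof -
  have "C0 \<inter> (\<lambda>w. y + w) ` C0 = {}"
  proof (rule ccontr)
    assume "C0 \<inter> (\<lambda>w. y + w) ` C0 \<noteq> {}"
    then obtain w where "y + w \<in> C0" "w \<in> C0"
      by blast
    then have "(y + w) + w \<in> C0"
      by (rule linear_code_add[OF assms(1)])
    then show False
      using assms(6) by (simp add: add.assoc)
  qed
  moreover have "card ((\<lambda>w. y + w) ` C0) = card C0"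
    by (rule card_image) (simp add: inj_on_def)
  ultimately have "card (C0 \<union> (\<lambda>w. y + w) ` C0) = card C"
    using assms(4) by (simp add: card_Un_disjoint)
  moreover have "C0 \<union> (\<lambda>w. y + w) ` C0 \<subseteq> C"
    using assms(2,3,5) linear_code_add by blast
  ultimately have "C = C0 \<union> (\<lambda>w. y + w) ` C0"
    by (metis card_subset_eq finite)
  then obtain w where "w \<in> C0" "z = y + w"
    using assms(7,8) by blast
  then show ?thesis
    by (simp add: add.commute add.left_commute)
qed

lemma dual_codim_one:
  assumes "linear_code C0" "C0 \<subseteq> C" "linear_code C" "card C = 2 * card C0"
    and "y \<in> C" "y \<notin> C0" "v \<in> dual C0" "ip v y = 0"
  shows "v \<in> dual C"
  unfolding dual_def
proof (intro CollectI ballI)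
  fix z assume "z \<in> C"
  show "ip v z = 0"
  proof (cases "z \<in> C0")
    case True
    then show ?thesis using assms(7) by (simp add: dual_def)
  next
    case False
    then have "z + y \<in> C0"
      using assms \<open>z \<in> C\<close> by (intro codim_one_coset)
    then have "ip v (z + y) = 0"
      using assms(7) by (simp add: dual_def)
    then show ?thesis
      using assms(8) by (simp add: ip_add_right)
  qed
qed

subsection \<open>Self-dual neighbors\<close>

lemma ones_in_self_dual:
  assumes "self_dual C"
  shows "(\<lambda>_. 1) \<in> C"
proof -
  have "C = dual C"
    using assms by (simp add: self_dual_def)
  then have "ip (\<lambda>_. 1) y = 0" if "y \<in> C" for y
    using that by (auto simp: dual_def simp flip: ip_self)
  then show ?thesis
    using \<open>C = dual C\<close> by (auto simp: dual_def)
qed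

lemma min_dist_le_wt: "x \<in> C \<Longrightarrow> x \<noteq> 0 \<Longrightarrow> min_dist C \<le> wt x"
  for C :: "('n::finite \<Rightarrow> bit) set"
  unfolding min_dist_def by (rule Min_le) auto

lemma neighbors_sym: "neighbors C1 C2 \<Longrightarrow> neighbors C2 C1"
  by (simp add: neighbors_def Int_commute)

lemma card_neighbors_Int:
  fixes C1 C2 :: "('n::finite \<Rightarrow> bit) set"
  assumes "neighbors C1 C2"
  shows "card C1 = 2 * card (C1 \<inter> C2)"
proof -
  have "self_dual C1" "self_dual C2" and dim_Int: "code_dim (C1 \<inter> C2) = CARD('n) div 2 - 1"
    using assms by (simp_all add: neighbors_def)
  then have "linear_code C1" "linear_code (C1 \<inter> C2)"
    by (simp_all add: self_dual_def linear_code_Int)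
  moreover have "code_dim C1 = Suc (code_dim (C1 \<inter> C2))"
  proof -
    have "2 * code_dim C1 = CARD('n)"
      using \<open>self_dual C1\<close> by (rule self_dual_code_dim)
    moreover have "0 < CARD('n)"
      by simp
    ultimately show ?thesis
      using dim_Int by (simp flip: \<open>2 * code_dim C1 = CARD('n)\<close>)
  qed
  ultimately show ?thesis
    by (simp add: card_linear_code)
qed

lemma singly_even_neighbor_dual_weight_2_mod_4:
  assumes "singly_even C1" "doubly_even C2" "neighbors C1 C2"
    and c: "c \<in> dual (C1 \<inter> C2)" "wt c mod 4 = 2"
  shows "c \<in> C1"
proof (rule ccontr)
  assume "c \<notin> C1"
  define C0 where "C0 = C1 \<inter> C2"
  have dual1: "dual C1 = C1" and dual2: "dual C2 = C2"
    and lin1: "linear_code C1" and lin2: "linear_code C2"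
    using assms(3) by (simp_all add: neighbors_def self_dual_def)
  then have lin: "linear_code C0" and C0_sub: "C0 \<subseteq> C1" "C0 \<subseteq> C2"
    by (auto simp: C0_def linear_code_Int)
  have card: "card C1 = 2 * card C0" "card C2 = 2 * card C0"
    using card_neighbors_Int[OF assms(3)] card_neighbors_Int[OF neighbors_sym[OF assms(3)]]
    by (simp_all add: C0_def Int_commute)
  have doubly: "wt z mod 4 = 0" if "z \<in> C2" for z
    using assms(2) that by (simp add: doubly_even_def)
  have "c \<in> dual C0" "c \<notin> C2"
    using c doubly by (force simp: C0_def)+
  obtain x where x: "x \<in> C1" "wt x mod 4 = 2"
    using assms(1) by (auto simp: singly_even_def)
  have "x \<notin> C0" "x \<notin> C2"
    using x doubly C0_sub by force+
  have "x \<in> dual C0"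
    using x(1) dual1 dual_antimono[OF C0_sub(1)] by blast
  have "card C0 > 0"
    using linear_code_zero[OF lin] by (auto simp: card_gt_0_iff)
  then have "\<not> C2 \<subseteq> C0"
    using card(2) card_mono[of C0 C2] by auto
  then obtain y where y: "y \<in> C2" "y \<notin> C0"
    by blast
  note dual_codim_one_C2 = dual_codim_one[OF lin C0_sub(2) lin2 card(2) y]
  have "ip x y \<noteq> 0"
    using dual_codim_one_C2[OF \<open>x \<in> dual C0\<close>] \<open>x \<notin> C2\<close> dual2 by metis
  moreover have "ip c y \<noteq> 0"
    using dual_codim_one_C2[OF \<open>c \<in> dual C0\<close>] \<open>c \<notin> C2\<close> dual2 by metis
  moreover have "ip c x \<noteq> 0"
    using dual_codim_one[OF lin C0_sub(1) lin1 card(1) x(1) \<open>x \<notin> C0\<close> \<open>c \<in> dual C0\<close>]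
      \<open>c \<notin> C1\<close> dual1 by metis
  ultimately have "ip (c + x) y = 0" and "wt (c + x) mod 4 = (wt c + wt x + 2) mod 4"
    using wt_add_mod_4[of c x] by (simp_all add: ip_add_left)
  moreover have "(wt c + wt x + 2) mod 4 = 2"
    using c(2) x(2) by presburger
  moreover have "c + x \<in> dual C0"
    using \<open>c \<in> dual C0\<close> \<open>x \<in> dual C0\<close> by (rule dual_add)
  ultimately show False
    using dual_codim_one_C2 dual2 doubly by force
qed

theorem mainTheorem5:
  fixes C1 C2 :: "('n::finite \<Rightarrow> bit) set" and n k d :: nat
  assumes "n = card (UNIV :: 'n set)"
    and "self_dual C1" and "singly_even C1"
    and "code_dim C1 = k" and "min_dist C1 = d"
    and "self_dual C2" and "doubly_even C2"
    and "neighbors C1 C2"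
  shows "\<forall>c\<in>dual (C1 \<inter> C2). wt c mod 4 = 2 \<longrightarrow> d \<le> wt c \<and> wt c \<le> n - d"
proof (intro ballI impI)
  fix c assume c: "c \<in> dual (C1 \<inter> C2)" "wt c mod 4 = 2"
  have "c \<in> C1"
    using assms(3,7,8) c by (rule singly_even_neighbor_dual_weight_2_mod_4)
  have "c \<noteq> 0"
    using c(2) by auto
  have "n mod 4 = 0"
    using ones_in_self_dual[OF assms(6)] assms(1,7) by (auto simp: doubly_even_def)
  then have "c + (\<lambda>_. 1) \<noteq> 0"
    using c(2) wt_add_ones[of c] wt_le_card[of c] assms(1) by (auto simp flip: wt_eq_0_iff)
  moreover have "c + (\<lambda>_. 1) \<in> C1"
    using assms(2) \<open>c \<in> C1\<close> ones_in_self_dual[OF assms(2)]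
    by (simp add: self_dual_def linear_code_add)
  ultimately have "d \<le> n - wt c"
    using min_dist_le_wt[of "c + (\<lambda>_. 1)" C1] wt_add_ones[of c] assms(1,5) by simp
  moreover have "d \<le> wt c"
    using min_dist_le_wt[OF \<open>c \<in> C1\<close> \<open>c \<noteq> 0\<close>] assms(5) by simp
  ultimately show "d \<le> wt c \<and> wt c \<le> n - d"
    using wt_le_card[of c] assms(1) by linarith
qed

end
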